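(* Let $\mathcal T$ be an admissible labeled tree. For an unordered pair of labels $\{i,j\}$ let $b_{ij}$ be the number of edges of $\mathcal T$ whose endpoints have labels $i$ and $j$. Then \[ \sum_{\{i,j\}:\,b_{ij}>2} b_{ij}\le 6\,\Delta(\mathcal T). \]
   Context: Setting: $T$ is a finite rooted tree with levels (root at level $t$, children of a level-$s$ vertex at level $s-1$). A labeling gives each vertex $v$ a label $\ell(v)\in[N]$. The labeled tree $\mathcal T$ is admissible if (i) whenever $u$ is the parent of $v$ and $v$ the parent of $w$, $\ell(u)\ne\ell(w)$; (ii) for every edge $\{u,v\}$ there is another edge $\{u',v'\}$ with $\{\ell(u'),\ell(v')\}=\{\ell(u),\ell(v)\}$. $|V(\mathcal T)|$ is the number of distinct labels used (including the root's), $|E(\mathcal T)|$ the number of edges, and $\Delta(\mathcal T)=\tfrac12|E(\mathcal T)|-|V(\mathcal T)|+1$. *)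

theory Defs
  imports Complex_Main
begin

text \<open>The root is at level t and every non-root vertex v has its
  parent par v in V, one level above v. (This forces V to be a rooted tree: following
  parents strictly increases the level, so every vertex reaches r.)
  The edges are the pairs {par v, v} for v in V - {r}, indexed by the child v.\<close>

definition leveled_rooted_tree ::
  "'a set \<Rightarrow> 'a \<Rightarrow> ('a \<Rightarrow> 'a) \<Rightarrow> ('a \<Rightarrow> nat) \<Rightarrow> nat \<Rightarrow> bool" where
  "leveled_rooted_tree V r par lev t \<longleftrightarrow>
     finite V \<and> r \<in> V \<and> lev r = t \<and>
     (\<forall>v \<in> V - {r}. par v \<in> V \<and> lev (par v) = lev v + 1)"

definition edge_labels :: "('a \<Rightarrow> 'a) \<Rightarrow> ('a \<Rightarrow> nat) \<Rightarrow> 'a \<Rightarrow> nat set" where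
  "edge_labels par l v = {l (par v), l v}"

definition admissible ::
  "'a set \<Rightarrow> 'a \<Rightarrow> ('a \<Rightarrow> 'a) \<Rightarrow> ('a \<Rightarrow> nat) \<Rightarrow> nat \<Rightarrow> nat \<Rightarrow> ('a \<Rightarrow> nat) \<Rightarrow> bool" where
  "admissible V r par lev t N l \<longleftrightarrow>
     leveled_rooted_tree V r par lev t \<and>
     (\<forall>v \<in> V. l v \<in> {1..N}) \<and>
     \<comment> \<open>(i) grandparent and grandchild have different labels\<close>
     (\<forall>w \<in> V - {r}. par w \<noteq> r \<longrightarrow> l (par (par w)) \<noteq> l w) \<and>
     \<comment> \<open>(ii) every edge has another edge with the same pair of labels\<close>
     (\<forall>v \<in> V - {r}. \<exists>v' \<in> V - {r}. v' \<noteq> v \<and> edge_labels par l v' = edge_labels par l v)"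

definition b_count :: "'a set \<Rightarrow> 'a \<Rightarrow> ('a \<Rightarrow> 'a) \<Rightarrow> ('a \<Rightarrow> nat) \<Rightarrow> nat set \<Rightarrow> nat" where
  "b_count V r par l P = card {v \<in> V - {r}. edge_labels par l v = P}"

definition num_labels :: "'a set \<Rightarrow> ('a \<Rightarrow> nat) \<Rightarrow> nat" where
  "num_labels V l = card (l ` V)"

definition num_edges :: "'a set \<Rightarrow> 'a \<Rightarrow> nat" where
  "num_edges V r = card (V - {r})"

definition Delta :: "'a set \<Rightarrow> 'a \<Rightarrow> ('a \<Rightarrow> nat) \<Rightarrow> real" where
  "Delta V r l = real (num_edges V r) / 2 - real (num_labels V l) + 1"

end

theory Submission
  imports Defs
begin

text \<open>Every class of edges with a common label pair has at least two members (admissibility (ii)),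
  so a class of size \<open>b > 2\<close> satisfies \<open>b \<le> 3 (b - 2)\<close>, and summing \<open>b - 2\<close> over all classes gives
  \<open>|E| - 2 \<cdot> #classes\<close>. The label pairs of the edges connect all labels of the tree, hence
  \<open>#labels \<le> #classes + 1\<close>, which turns \<open>3 (|E| - 2 \<cdot> #classes)\<close> into at most \<open>6 \<Delta>\<close>.\<close>

lemma leveled_rooted_tree_obtain_leaf:
  assumes "leveled_rooted_tree V r par lev t" and "V \<noteq> {r}"
  obtains v where "v \<in> V - {r}" and "v \<notin> par ` (V - {r})"
proof -
  have fin: "finite (V - {r})" and ne: "V - {r} \<noteq> {}"
    using assms unfolding leveled_rooted_tree_def by auto
  obtain v where v: "v \<in> V - {r}" and "lev v = Min (lev ` (V - {r}))"
  proof -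
    have "Min (lev ` (V - {r})) \<in> lev ` (V - {r})"
      using fin ne by simp
    then show thesis
      using that by (metis imageE)
  qed
  then have v_min: "lev v \<le> lev u" if "u \<in> V - {r}" for u
    using fin that by simp
  have "v \<notin> par ` (V - {r})"
  proof
    assume "v \<in> par ` (V - {r})"
    then obtain u where "u \<in> V - {r}" and "v = par u" by auto
    then have "lev v = lev u + 1" and "lev v \<le> lev u"
      using assms(1) v_min[of u] unfolding leveled_rooted_tree_def by auto
    then show False by simp
  qed
  with v show thesis by (rule that)
qed

lemma leveled_rooted_tree_remove_leaf:
  assumes "leveled_rooted_tree V r par lev t" and "v \<in> V - {r}" and "v \<notin> par ` (V - {r})"
  shows "leveled_rooted_tree (V - {v}) r par lev t"
  using assms unfolding leveled_rooted_tree_def by (auto simp: image_iff)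

text \<open>Removing a leaf \<open>v\<close> either keeps the set of labels, or its label \<open>l v\<close> is new, and then so is
  the label pair of its edge, since \<open>l v\<close> belongs to that pair.\<close>

lemma card_labels_le_card_edge_labels:
  assumes "leveled_rooted_tree V r par lev t"
  shows "card (l ` V) \<le> card (edge_labels par l ` (V - {r})) + 1"
  using assms
proof (induction "card V" arbitrary: V rule: less_induct)
  case (less V)
  have fin: "finite V" and r: "r \<in> V"
    using less.prems unfolding leveled_rooted_tree_def by auto
  show ?case
  proof (cases "V = {r}")
    case True
    then show ?thesis by simp
  next
    case False
    then obtain v where v: "v \<in> V - {r}" and leaf: "v \<notin> par ` (V - {r})"
      using leveled_rooted_tree_obtain_leaf[OF less.prems] by blast
    let ?V' = "V - {v}"
    have tree': "leveled_rooted_tree ?V' r par lev t"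
      using leveled_rooted_tree_remove_leaf[OF less.prems v leaf] .
    have IH: "card (l ` ?V') \<le> card (edge_labels par l ` (?V' - {r})) + 1"
    proof (rule less.hyps[OF _ tree'])
      show "card ?V' < card V"
        using fin v by (intro psubset_card_mono) auto
    qed
    have E_eq: "V - {r} = insert v (?V' - {r})"
      using v by auto
    have fin_E': "finite (edge_labels par l ` (?V' - {r}))"
      using fin by simp
    show ?thesis
    proof (cases "l v \<in> l ` ?V'")
      case True
      then have "l ` V = l ` ?V'"
        using v by blast
      moreover have "card (edge_labels par l ` (?V' - {r})) \<le> card (edge_labels par l ` (V - {r}))"
        using fin by (intro card_mono) auto
      ultimately show ?thesis
        using IH by simp
    next
      case False
      have "edge_labels par l v \<notin> edge_labels par l ` (?V' - {r})"
      proof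
        assume "edge_labels par l v \<in> edge_labels par l ` (?V' - {r})"
        then obtain u where u: "u \<in> ?V' - {r}" and same: "edge_labels par l u = edge_labels par l v"
          by auto
        have "par u \<in> ?V'"
          using tree' u unfolding leveled_rooted_tree_def by auto
        moreover have "l v \<in> {l (par u), l u}"
          using same unfolding edge_labels_def by auto
        ultimately show False
          using False u by auto
      qed
      then have "card (edge_labels par l ` (V - {r})) = card (edge_labels par l ` (?V' - {r})) + 1"
        using fin_E' by (simp add: E_eq)
      moreover have "card (l ` V) \<le> card (l ` ?V') + 1"
      proof -
        have "l ` V = insert (l v) (l ` ?V')"
          using v by blast
        then show ?thesis
          using fin by (simp add: card_insert_if)
      qed
      ultimately show ?thesis
        using IH by simp
    qed
  qed
qed

lemma sum_b_count_eq_num_edges: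
  assumes "finite V"
  shows "(\<Sum>P \<in> edge_labels par l ` (V - {r}). b_count V r par l P) = num_edges V r"
  using sum.image_gen[of "V - {r}" "\<lambda>_. 1::nat" "edge_labels par l"] assms
  unfolding b_count_def num_edges_def by (simp add: eq_commute)

lemma b_count_pos_imp_edge_labels:
  assumes "b_count V r par l P > 0"
  shows "P \<in> edge_labels par l ` (V - {r})"
proof -
  have "{v \<in> V - {r}. edge_labels par l v = P} \<noteq> {}"
    using assms unfolding b_count_def by (metis card.empty less_irrefl)
  then show ?thesis by auto
qed

lemma admissible_b_count_ge_2:
  assumes "admissible V r par lev t N l" and "P \<in> edge_labels par l ` (V - {r})"
  shows "b_count V r par l P \<ge> 2"
proof -
  obtain v where v: "v \<in> V - {r}" and P: "edge_labels par l v = P"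
    using assms(2) by auto
  then obtain v' where v': "v' \<in> V - {r}" "v' \<noteq> v" "edge_labels par l v' = P"
    using assms(1) unfolding admissible_def by blast
  have "finite V"
    using assms(1) unfolding admissible_def leveled_rooted_tree_def by auto
  then have "card {v, v'} \<le> b_count V r par l P"
    unfolding b_count_def using v P v' by (intro card_mono) auto
  then show ?thesis
    using v' by simp
qed

lemma admissible_sum_b_count_minus_2:
  assumes "admissible V r par lev t N l"
  shows "(\<Sum>P \<in> edge_labels par l ` (V - {r}). b_count V r par l P - 2)
           + 2 * card (edge_labels par l ` (V - {r})) = num_edges V r"
proof -
  let ?S = "edge_labels par l ` (V - {r})"
  have fin: "finite V"
    using assms unfolding admissible_def leveled_rooted_tree_def by simp
  have "(\<Sum>P \<in> ?S. b_count V r par l P - 2) + 2 * card ?S = (\<Sum>P \<in> ?S. b_count V r par l P - 2 + 2)"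
    by (simp add: sum.distrib del: add_2_eq_Suc')
  also have "\<dots> = (\<Sum>P \<in> ?S. b_count V r par l P)"
    using admissible_b_count_ge_2[OF assms] by (intro sum.cong) (auto simp del: add_2_eq_Suc')
  also have "\<dots> = num_edges V r"
    using sum_b_count_eq_num_edges[OF fin] .
  finally show ?thesis .
qed

lemma large_label_pairs_eq:
  "{P. (\<exists>i j. P = {i, j}) \<and> b_count V r par l P > 2}
     = {P \<in> edge_labels par l ` (V - {r}). b_count V r par l P > 2}"
  using b_count_pos_imp_edge_labels[of V r par l] unfolding edge_labels_def by force

lemma sum_gt_2_le_3_sum_minus_2:
  fixes f :: "'a \<Rightarrow> nat"
  assumes "finite S"
  shows "(\<Sum>x \<in> {x \<in> S. f x > 2}. f x) \<le> 3 * (\<Sum>x \<in> S. f x - 2)"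
proof -
  have "(\<Sum>x \<in> {x \<in> S. f x > 2}. f x) \<le> (\<Sum>x \<in> {x \<in> S. f x > 2}. 3 * (f x - 2))"
    by (intro sum_mono) auto
  also have "\<dots> \<le> (\<Sum>x \<in> S. 3 * (f x - 2))"
    using assms by (intro sum_mono2) auto
  finally show ?thesis
    by (simp add: sum_distrib_left)
qed

theorem lemma2p12:
  fixes V :: "'a set" and r :: 'a and par :: "'a \<Rightarrow> 'a" and lev :: "'a \<Rightarrow> nat"
    and t N :: nat and l :: "'a \<Rightarrow> nat"
  assumes "admissible V r par lev t N l"
  shows "real (\<Sum>P \<in> {P. (\<exists>i j. P = {i, j}) \<and> b_count V r par l P > 2}. b_count V r par l P)
           \<le> 6 * Delta V r l"
proof -
  let ?S = "edge_labels par l ` (V - {r})"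
  let ?b = "b_count V r par l"
  have tree: "leveled_rooted_tree V r par lev t"
    using assms unfolding admissible_def by simp
  then have "finite ?S"
    unfolding leveled_rooted_tree_def by simp
  then have "(\<Sum>P \<in> {P. (\<exists>i j. P = {i, j}) \<and> ?b P > 2}. ?b P) \<le> 3 * (\<Sum>P \<in> ?S. ?b P - 2)"
    unfolding large_label_pairs_eq by (rule sum_gt_2_le_3_sum_minus_2)
  moreover have "(\<Sum>P \<in> ?S. ?b P - 2) + 2 * card ?S = num_edges V r"
    using admissible_sum_b_count_minus_2[OF assms] .
  moreover have "card (l ` V) \<le> card ?S + 1"
    using card_labels_le_card_edge_labels[OF tree] .
  moreover have "6 * Delta V r l = 3 * real (num_edges V r) - 6 * real (card (l ` V)) + 6"
    unfolding Delta_def num_labels_def by simp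
  ultimately show ?thesis
    by linarith
qed

end
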